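(* Let $X$ and $Y$ be nontrivial real Banach spaces. (a) If $X$ is locally octahedral, then $X\oplus_1 Y$ is locally octahedral. (b) If $X$ and $Y$ are locally octahedral and $1<p\leq\infty$, then $X\oplus_p Y$ is locally octahedral. (c) If $X\oplus_p Y$ is locally octahedral, where $1<p\leq\infty$, then $X$ is locally octahedral.
   Context: For $1\le p<\infty$, $X\oplus_p Y$ is $X\times Y$ with norm $\|(x,y)\|_p=(\|x\|^p+\|y\|^p)^{1/p}$; $X\oplus_\infty Y$ has norm $\max\{\|x\|,\|y\|\}$. A Banach space $Z$ is locally octahedral if for every $z\in Z$ and every $\varepsilon>0$ there is a $w\in S_Z$ (unit sphere) such that $\|sz+w\|\geq(1-\varepsilon)(|s|\|z\|+\|w\|)$ for all $s\in\mathbb{R}$. *)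

theory Defs
  imports "HOL-Analysis.Analysis"
begin

definition locally_octahedral_wrt :: "('v::real_vector \<Rightarrow> real) \<Rightarrow> bool" where
  "locally_octahedral_wrt N \<longleftrightarrow>
     (\<forall>z. \<forall>\<epsilon>>0. \<exists>w. N w = 1 \<and>
        (\<forall>s::real. N (s *\<^sub>R z + w) \<ge> (1 - \<epsilon>) * (\<bar>s\<bar> * N z + N w)))"

abbreviation locally_octahedral :: "'a::real_normed_vector itself \<Rightarrow> bool" where
  "locally_octahedral _ \<equiv> locally_octahedral_wrt (norm :: 'a \<Rightarrow> real)"

definition psum_norm :: "ereal \<Rightarrow> ('a::real_normed_vector \<times> 'b::real_normed_vector) \<Rightarrow> real" where
  "psum_norm p xy =
     (if p = \<infinity> then max (norm (fst xy)) (norm (snd xy))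
      else (norm (fst xy) powr real_of_ereal p + norm (snd xy) powr real_of_ereal p)
             powr (1 / real_of_ereal p))"

end

theory Submission
  imports Defs
begin

text \<open>
  Write \<open>\<parallel>(a, b)\<parallel>\<^sub>p\<close> for the \<open>\<ell>\<^sub>p\<close>-norm on \<open>\<real>\<^sup>2\<close>, so that
  \<open>\<parallel>(x, y)\<parallel> = \<parallel>(\<parallel>x\<parallel>, \<parallel>y\<parallel>)\<parallel>\<^sub>p\<close> in \<open>X \<oplus>\<^sub>p Y\<close>.
  For (a) and (b), given \<open>z = (x, y)\<close> take octahedral directions \<open>w\<^sub>1\<close> for \<open>x\<close> and \<open>w\<^sub>2\<close> for
  \<open>y\<close> and put \<open>W = (\<parallel>x\<parallel> w\<^sub>1, \<parallel>y\<parallel> w\<^sub>2) / \<parallel>z\<parallel>\<close>: each coordinate of \<open>s z + W\<close> then has norm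
  at least \<open>(1 - \<epsilon>)(|s| + 1/\<parallel>z\<parallel>)\<close> times the corresponding coordinate of \<open>z\<close>, and
  monotonicity and homogeneity of \<open>\<parallel>\<cdot>\<parallel>\<^sub>p\<close> lift this to \<open>z\<close>. For \<open>p = 1\<close> the single
  direction \<open>(w\<^sub>1, 0)\<close> already works.

  For (c), apply local octahedrality of \<open>X \<oplus>\<^sub>p Y\<close> to \<open>(x, 0)\<close> and obtain \<open>(u, v)\<close> of norm 1.
  At \<open>s = 1/\<parallel>x\<parallel>\<close> this gives \<open>\<parallel>(1 + \<parallel>u\<parallel>, \<parallel>v\<parallel>)\<parallel>\<^sub>p \<approx> 2\<close>. For \<open>p < \<infinity>\<close> strict convexity of
  \<open>t \<mapsto> t\<^sup>p\<close> then forces \<open>\<parallel>v\<parallel> \<approx> 0\<close> and \<open>\<parallel>u\<parallel> \<approx> 1\<close>; for \<open>p = \<infinity>\<close> it forces \<open>\<parallel>u\<parallel> \<approx> 1\<close>, and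
  \<open>\<parallel>v\<parallel>\<close> can dominate \<open>\<parallel>s x + u\<parallel>\<close> only when \<open>|s| \<parallel>x\<parallel>\<close> is small. Either way \<open>u / \<parallel>u\<parallel>\<close> is an
  octahedral direction for \<open>x\<close> in \<open>X\<close>.
\<close>

section \<open>The \<open>\<ell>\<^sub>p\<close>-norm on \<open>\<real>\<^sup>2\<close>\<close>

definition lp_norm2 :: "ereal \<Rightarrow> real \<Rightarrow> real \<Rightarrow> real" where
  "lp_norm2 p a b =
     (if p = \<infinity> then max a b
      else (a powr real_of_ereal p + b powr real_of_ereal p) powr (1 / real_of_ereal p))"

lemma psum_norm_eq_lp_norm2: "psum_norm p xy = lp_norm2 p (norm (fst xy)) (norm (snd xy))"
  by (simp add: psum_norm_def lp_norm2_def)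

lemma lp_norm2_infinity [simp]: "lp_norm2 \<infinity> a b = max a b"
  by (simp add: lp_norm2_def)

lemma lp_norm2_ereal [simp]: "lp_norm2 (ereal q) a b = (a powr q + b powr q) powr (1 / q)"
  by (simp add: lp_norm2_def)

lemma ereal_ge_one_cases:
  assumes "1 \<le> p"
  obtains "p = \<infinity>" | q where "p = ereal q" "1 \<le> q"
  using assms by (cases p) auto

lemma powr_add_powr_root_le_add:
  fixes q a b :: real
  assumes "1 \<le> q" "0 \<le> a" "0 \<le> b"
  shows "(a powr q + b powr q) powr (1 / q) \<le> a + b"
proof (cases "a + b = 0")
  case True
  then have "a = 0" "b = 0" using assms by auto
  then show ?thesis by simp
next
  case False
  then have S: "a + b > 0" using assms by linarith
  have "(a / (a + b)) powr q \<le> a / (a + b)" "(b / (a + b)) powr q \<le> b / (a + b)"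
    using powr_mono'[of 1 q "a / (a + b)"] powr_mono'[of 1 q "b / (a + b)"] assms S by simp_all
  moreover have "a / (a + b) + b / (a + b) = 1"
    using S by (simp add: add_divide_distrib[symmetric])
  ultimately have "(a / (a + b)) powr q + (b / (a + b)) powr q \<le> 1"
    by linarith
  then have "a powr q + b powr q \<le> (a + b) powr q"
    using S assms by (simp add: powr_divide divide_simps)
  then have "(a powr q + b powr q) powr (1 / q) \<le> ((a + b) powr q) powr (1 / q)"
    using assms by (intro powr_mono2) auto
  then show ?thesis using S assms by (simp add: powr_powr)
qed

lemma powr_add_le_two_powr:
  fixes q a b :: real
  assumes q: "1 \<le> q" and "0 \<le> a" "0 \<le> b"
  shows "(a + b) powr q \<le> 2 powr (q - 1) * (a powr q + b powr q)"
proof (cases "a = 0 \<or> b = 0")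
  case True
  have "1 \<le> (2::real) powr (q - 1)" using q by (simp add: ge_one_powr_ge_zero)
  then show ?thesis
    using True mult_right_mono[of 1 "2 powr (q - 1)" "a powr q + b powr q"] by auto
next
  case False
  then have "a > 0" "b > 0" using assms by auto
  then have "((1 - 1/2) *\<^sub>R a + (1/2) *\<^sub>R b) powr q \<le> (1 - 1/2) * a powr q + (1/2) * b powr q"
    using convex_onD[OF powr_convex[OF q], of "1/2" a b] by simp
  then have "((a + b) / 2) powr q \<le> (a powr q + b powr q) / 2"
    by (simp add: field_simps)
  then have "2 powr q * ((a + b) / 2) powr q \<le> 2 powr q * ((a powr q + b powr q) / 2)"
    by (rule mult_left_mono) simp
  then show ?thesis
    using \<open>a > 0\<close> \<open>b > 0\<close> by (simp add: powr_divide powr_diff)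
qed

lemma lp_norm2_nonneg: "0 \<le> a \<Longrightarrow> 0 \<le> lp_norm2 p a b"
  by (auto simp: lp_norm2_def le_max_iff_disj)

lemma lp_norm2_mono:
  assumes "1 \<le> p" "0 \<le> a" "a \<le> a'" "0 \<le> b" "b \<le> b'"
  shows "lp_norm2 p a b \<le> lp_norm2 p a' b'"
  using assms(1)
proof (cases rule: ereal_ge_one_cases)
  case (2 q)
  then show ?thesis using assms by (auto intro!: powr_mono2 add_mono)
qed (use assms in auto)

lemma lp_norm2_scale:
  assumes "1 \<le> p" "0 \<le> c" "0 \<le> a" "0 \<le> b"
  shows "lp_norm2 p (c * a) (c * b) = c * lp_norm2 p a b"
  using assms(1)
proof (cases rule: ereal_ge_one_cases)
  case (2 q)
  then have "(c * a) powr q + (c * b) powr q = c powr q * (a powr q + b powr q)"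
    using assms by (simp add: powr_mult algebra_simps)
  then show ?thesis using 2 assms by (simp add: powr_mult powr_powr)
qed (use assms in \<open>simp add: max_mult_distrib_left\<close>)

lemma lp_norm2_zero_right: "1 \<le> p \<Longrightarrow> 0 \<le> a \<Longrightarrow> lp_norm2 p a 0 = a"
  by (cases rule: ereal_ge_one_cases) (auto simp: powr_powr)

lemma lp_norm2_zero_left: "1 \<le> p \<Longrightarrow> 0 \<le> b \<Longrightarrow> lp_norm2 p 0 b = b"
  by (cases rule: ereal_ge_one_cases) (auto simp: powr_powr)

lemma lp_norm2_ge_left: "1 \<le> p \<Longrightarrow> 0 \<le> a \<Longrightarrow> 0 \<le> b \<Longrightarrow> a \<le> lp_norm2 p a b"
  using lp_norm2_mono[of p a a 0 b] by (simp add: lp_norm2_zero_right)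

lemma lp_norm2_ge_right: "1 \<le> p \<Longrightarrow> 0 \<le> a \<Longrightarrow> 0 \<le> b \<Longrightarrow> b \<le> lp_norm2 p a b"
  using lp_norm2_mono[of p 0 a b b] by (simp add: lp_norm2_zero_left)

lemma lp_norm2_le_add: "1 \<le> p \<Longrightarrow> 0 \<le> a \<Longrightarrow> 0 \<le> b \<Longrightarrow> lp_norm2 p a b \<le> a + b"
  by (cases rule: ereal_ge_one_cases) (auto simp: powr_add_powr_root_le_add)

lemma lq_doubling_defect_bound:
  fixes q \<delta> \<alpha> \<beta> :: real
  assumes q: "1 \<le> q" and \<delta>: "\<delta> \<le> 1" and \<alpha>: "0 \<le> \<alpha>" and \<beta>: "0 \<le> \<beta>"
    and unit: "\<alpha> powr q + \<beta> powr q = 1"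
    and doubling: "2 * (1 - \<delta>) \<le> ((1 + \<alpha>) powr q + \<beta> powr q) powr (1 / q)"
  shows "(2 powr (q - 1) - 1) * \<beta> powr q \<le> 2 powr q * (1 - (1 - \<delta>) powr q)"
proof -
  have two_powr: "2 powr (q - 1) * 2 = (2::real) powr q"
    by (simp add: powr_diff)
  have "2 powr q * (1 - \<delta>) powr q = (2 * (1 - \<delta>)) powr q"
    using powr_mult[of 2 "1 - \<delta>" q] \<delta> by simp
  also have "\<dots> \<le> (((1 + \<alpha>) powr q + \<beta> powr q) powr (1 / q)) powr q"
    using doubling \<delta> q by (intro powr_mono2) auto
  also have "\<dots> = (1 + \<alpha>) powr q + \<beta> powr q"
    using q by (simp add: powr_powr)
  also have "\<dots> \<le> 2 powr (q - 1) * (1 + \<alpha> powr q) + \<beta> powr q"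
    using powr_add_le_two_powr[of q 1 \<alpha>] q \<alpha> by simp
  also have "\<dots> = 2 powr q - (2 powr (q - 1) - 1) * \<beta> powr q"
    using arg_cong[OF unit, of "\<lambda>t. 2 powr (q - 1) * t"] two_powr
    by (simp add: algebra_simps)
  finally show ?thesis by (simp add: algebra_simps)
qed

text \<open>The constant \<open>2 powr (q - 1) - 1\<close> above is positive only for \<open>q > 1\<close>; this is where
  \<open>p > 1\<close> enters in (c).\<close>

lemma eventually_lq_doubling_imp_second_small:
  fixes q \<eta> :: real
  assumes q: "1 < q" and \<eta>: "0 < \<eta>"
  shows "\<forall>\<^sub>F \<delta> in at_right 0. \<forall>\<alpha> \<beta>. 0 \<le> \<alpha> \<longrightarrow> 0 \<le> \<beta> \<longrightarrow> \<alpha> powr q + \<beta> powr q = 1 \<longrightarrow>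
           2 * (1 - \<delta>) \<le> ((1 + \<alpha>) powr q + \<beta> powr q) powr (1 / q) \<longrightarrow> \<beta> \<le> \<eta>"
proof -
  define c where "c = 2 powr (q - 1) - 1"
  have c: "0 < c" unfolding c_def using gr_one_powr[of 2 "q - 1"] q by simp
  have "((\<lambda>\<delta>. (1 - \<delta>) powr q) \<longlongrightarrow> (1 - 0) powr q) (at_right 0)"
    by (intro tendsto_intros) auto
  moreover have "1 - c * \<eta> powr q / 2 powr q < (1 - 0) powr q" using c \<eta> by simp
  ultimately have "\<forall>\<^sub>F \<delta> in at_right 0. 1 - c * \<eta> powr q / 2 powr q < (1 - \<delta>) powr q"
    by (rule order_tendstoD)
  moreover have "\<forall>\<^sub>F \<delta> in at_right (0::real). \<delta> < 1"
    using eventually_at_right_real[of 0 1] by (simp add: eventually_mono)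
  ultimately show ?thesis
  proof eventually_elim
    case (elim \<delta>)
    show ?case
    proof (intro allI impI)
      fix \<alpha> \<beta> :: real
      assume "0 \<le> \<alpha>" "0 \<le> \<beta>" "\<alpha> powr q + \<beta> powr q = 1"
        "2 * (1 - \<delta>) \<le> ((1 + \<alpha>) powr q + \<beta> powr q) powr (1 / q)"
      then have "c * \<beta> powr q \<le> 2 powr q * (1 - (1 - \<delta>) powr q)"
        using lq_doubling_defect_bound[of q \<delta> \<alpha> \<beta>] q elim by (simp add: c_def)
      also have "\<dots> < c * \<eta> powr q"
        using elim by (simp add: field_simps)
      finally have "\<beta> powr q < \<eta> powr q" using c by simp
      then show "\<beta> \<le> \<eta>"
        using powr_mono2[of q \<eta> \<beta>] \<eta> q by (cases "\<beta> \<le> \<eta>") auto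
    qed
  qed
qed

lemma lq_unit_sphere_first_ge:
  fixes q \<alpha> \<beta> :: real
  assumes q: "1 \<le> q" and \<alpha>: "0 \<le> \<alpha>" and \<beta>: "0 \<le> \<beta>" and unit: "\<alpha> powr q + \<beta> powr q = 1"
  shows "\<alpha> \<le> 1" "1 - \<beta> \<le> \<alpha>"
proof -
  have p: "1 \<le> ereal q" using q by simp
  have "(\<alpha> powr q + \<beta> powr q) powr (1 / q) = 1" using unit by simp
  then have "\<alpha> \<le> 1" "\<beta> \<le> 1"
    using lp_norm2_ge_left[OF p \<alpha> \<beta>] lp_norm2_ge_right[OF p \<alpha> \<beta>] by simp_all
  then show "\<alpha> \<le> 1" by simp
  from \<open>\<alpha> \<le> 1\<close> \<open>\<beta> \<le> 1\<close> have "\<alpha> powr q \<le> \<alpha>" "\<beta> powr q \<le> \<beta>"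
    using powr_mono'[of 1 q \<alpha>] powr_mono'[of 1 q \<beta>] q \<alpha> \<beta> by simp_all
  then show "1 - \<beta> \<le> \<alpha>" using unit by linarith
qed

section \<open>Sums of locally octahedral spaces\<close>

lemma locally_octahedral_wrtI:
  assumes nonneg: "\<And>v. 0 \<le> N v"
    and small: "\<And>z \<epsilon>. 0 < \<epsilon> \<Longrightarrow> \<epsilon> < 1 \<Longrightarrow>
      \<exists>w. N w = 1 \<and> (\<forall>s::real. (1 - \<epsilon>) * (\<bar>s\<bar> * N z + N w) \<le> N (s *\<^sub>R z + w))"
  shows "locally_octahedral_wrt N"
  unfolding locally_octahedral_wrt_def
proof (intro allI impI)
  fix z and \<epsilon> :: real
  assume "0 < \<epsilon>"
  then have "\<exists>w. N w = 1 \<and>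
      (\<forall>s::real. (1 - min \<epsilon> (1/2)) * (\<bar>s\<bar> * N z + N w) \<le> N (s *\<^sub>R z + w))"
    by (intro small) auto
  then obtain w where w: "N w = 1"
    and ineq: "\<And>s. (1 - min \<epsilon> (1/2)) * (\<bar>s\<bar> * N z + N w) \<le> N (s *\<^sub>R z + w)"
    by blast
  have "(1 - \<epsilon>) * (\<bar>s\<bar> * N z + N w) \<le> N (s *\<^sub>R z + w)" for s :: real
    using mult_right_mono[of "1 - \<epsilon>" "1 - min \<epsilon> (1/2)" "\<bar>s\<bar> * N z + N w"] nonneg[of z] w
      ineq[of s] by simp
  with w show "\<exists>w. N w = 1 \<and> (\<forall>s::real. N (s *\<^sub>R z + w) \<ge> (1 - \<epsilon>) * (\<bar>s\<bar> * N z + N w))"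
    by blast
qed

lemma locally_octahedral_normI:
  assumes "\<exists>e::'a::real_normed_vector. e \<noteq> 0"
    and "\<And>x::'a. \<And>\<epsilon>. x \<noteq> 0 \<Longrightarrow> 0 < \<epsilon> \<Longrightarrow> \<epsilon> < 1 \<Longrightarrow>
      \<exists>w. norm w = 1 \<and> (\<forall>s::real. (1 - \<epsilon>) * (\<bar>s\<bar> * norm x + norm w) \<le> norm (s *\<^sub>R x + w))"
  shows "locally_octahedral TYPE('a)"
proof (rule locally_octahedral_wrtI)
  fix x :: 'a and \<epsilon> :: real
  assume \<epsilon>: "0 < \<epsilon>" "\<epsilon> < 1"
  show "\<exists>w. norm w = 1 \<and> (\<forall>s::real. (1 - \<epsilon>) * (\<bar>s\<bar> * norm x + norm w) \<le> norm (s *\<^sub>R x + w))"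
  proof (cases "x = 0")
    case True
    obtain e :: 'a where "e \<noteq> 0" using assms(1) by blast
    then show ?thesis
      using True \<epsilon> by (intro exI[of _ "sgn e"]) (simp add: norm_sgn)
  qed (use assms(2) \<epsilon> in blast)
qed simp

lemma octahedral_ineq_scaleR:
  fixes x w :: "'a::real_normed_vector"
  assumes ineq: "\<And>t::real. (1 - \<epsilon>) * (\<bar>t\<bar> * norm x + 1) \<le> norm (t *\<^sub>R x + w)"
    and "0 \<le> \<epsilon>" "0 \<le> a"
  shows "(1 - \<epsilon>) * (\<bar>s\<bar> * norm x + a) \<le> norm (s *\<^sub>R x + a *\<^sub>R w)"
proof (cases "a = 0")
  case True
  then show ?thesis
    using assms mult_right_mono[of "1 - \<epsilon>" 1 "\<bar>s\<bar> * norm x"] by simp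
next
  case False
  with assms have a: "a > 0" by simp
  have "(1 - \<epsilon>) * (\<bar>s\<bar> * norm x + a) = a * ((1 - \<epsilon>) * (\<bar>s / a\<bar> * norm x + 1))"
    using a by (simp add: field_simps abs_div)
  also have "\<dots> \<le> a * norm ((s / a) *\<^sub>R x + w)"
    using a by (intro mult_left_mono[OF ineq]) simp
  also have "\<dots> = norm (a *\<^sub>R ((s / a) *\<^sub>R x + w))"
    using a by simp
  also have "\<dots> = norm (s *\<^sub>R x + a *\<^sub>R w)"
    using a by (simp add: scaleR_add_right)
  finally show ?thesis .
qed

lemma locally_octahedral_psum_one:
  assumes X: "locally_octahedral TYPE('a::real_normed_vector)"
  shows "locally_octahedral_wrt (psum_norm 1 :: 'a \<times> 'b::real_normed_vector \<Rightarrow> real)"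
  unfolding locally_octahedral_wrt_def
proof (intro allI impI)
  have norm1: "psum_norm 1 xy = norm (fst xy) + norm (snd xy)" for xy :: "'a \<times> 'b"
    by (simp add: psum_norm_def)
  fix z :: "'a \<times> 'b" and \<epsilon> :: real
  assume \<epsilon>: "0 < \<epsilon>"
  obtain x y where z: "z = (x, y)" by fastforce
  obtain w where w: "norm w = 1"
    and ineq: "\<And>s::real. (1 - \<epsilon>) * (\<bar>s\<bar> * norm x + norm w) \<le> norm (s *\<^sub>R x + w)"
    using X \<epsilon> unfolding locally_octahedral_wrt_def by blast
  have "(1 - \<epsilon>) * (\<bar>s\<bar> * psum_norm 1 z + psum_norm 1 (w, 0::'b)) \<le> psum_norm 1 (s *\<^sub>R z + (w, 0))"
    for s :: real
  proof -
    have "(1 - \<epsilon>) * (\<bar>s\<bar> * norm y) \<le> \<bar>s\<bar> * norm y"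
      using mult_right_mono[of "1 - \<epsilon>" 1 "\<bar>s\<bar> * norm y"] \<epsilon> by simp
    then show ?thesis
      using ineq[of s] w by (simp add: norm1 z distrib_left)
  qed
  moreover have "psum_norm 1 (w, 0::'b) = 1" using w by (simp add: norm1)
  ultimately show "\<exists>W. psum_norm 1 W = 1 \<and>
      (\<forall>s::real. psum_norm 1 (s *\<^sub>R z + W) \<ge> (1 - \<epsilon>) * (\<bar>s\<bar> * psum_norm 1 z + psum_norm 1 W))"
    by blast
qed

lemma psum_octahedral_ineq_proportional:
  fixes x w1 :: "'a::real_normed_vector" and y w2 :: "'b::real_normed_vector" and p :: ereal
  defines "n \<equiv> lp_norm2 p (norm x) (norm y)"
  assumes p: "1 \<le> p" and n: "0 < n" and \<epsilon>: "0 \<le> \<epsilon>" "\<epsilon> \<le> 1"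
    and ineq1: "\<And>t::real. (1 - \<epsilon>) * (\<bar>t\<bar> * norm x + 1) \<le> norm (t *\<^sub>R x + w1)"
    and ineq2: "\<And>t::real. (1 - \<epsilon>) * (\<bar>t\<bar> * norm y + 1) \<le> norm (t *\<^sub>R y + w2)"
  shows "(1 - \<epsilon>) * (\<bar>s\<bar> * n + 1)
           \<le> psum_norm p (s *\<^sub>R (x, y) + ((norm x / n) *\<^sub>R w1, (norm y / n) *\<^sub>R w2))"
proof -
  define c where "c = (1 - \<epsilon>) * (\<bar>s\<bar> + 1 / n)"
  have c: "c \<ge> 0" using \<epsilon> n by (simp add: c_def)
  have "c * norm x \<le> norm (s *\<^sub>R x + (norm x / n) *\<^sub>R w1)"
    using octahedral_ineq_scaleR[OF ineq1, of "norm x / n" s] \<epsilon> n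
    by (simp add: c_def algebra_simps)
  moreover have "c * norm y \<le> norm (s *\<^sub>R y + (norm y / n) *\<^sub>R w2)"
    using octahedral_ineq_scaleR[OF ineq2, of "norm y / n" s] \<epsilon> n
    by (simp add: c_def algebra_simps)
  ultimately have "lp_norm2 p (c * norm x) (c * norm y)
      \<le> psum_norm p (s *\<^sub>R (x, y) + ((norm x / n) *\<^sub>R w1, (norm y / n) *\<^sub>R w2))"
    using c by (simp add: psum_norm_eq_lp_norm2 lp_norm2_mono[OF p])
  moreover have "lp_norm2 p (c * norm x) (c * norm y) = c * n"
    using lp_norm2_scale[OF p c] by (simp add: n_def)
  moreover have "c * n = (1 - \<epsilon>) * (\<bar>s\<bar> * n + 1)"
    using n by (simp add: c_def field_simps)
  ultimately show ?thesis by simp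
qed

lemma locally_octahedral_psum:
  fixes p :: ereal
  assumes p: "1 \<le> p"
    and X: "locally_octahedral TYPE('a::real_normed_vector)"
    and Y: "locally_octahedral TYPE('b::real_normed_vector)"
  shows "locally_octahedral_wrt (psum_norm p :: 'a \<times> 'b \<Rightarrow> real)"
proof (rule locally_octahedral_wrtI)
  show "0 \<le> psum_norm p v" for v :: "'a \<times> 'b"
    by (simp add: psum_norm_eq_lp_norm2 lp_norm2_nonneg)
  fix z :: "'a \<times> 'b" and \<epsilon> :: real
  assume \<epsilon>: "0 < \<epsilon>" "\<epsilon> < 1"
  obtain x y where z: "z = (x, y)" by fastforce
  obtain w1 where w1: "norm w1 = 1"
    and ineq1: "\<And>s::real. (1 - \<epsilon>) * (\<bar>s\<bar> * norm x + 1) \<le> norm (s *\<^sub>R x + w1)"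
    using X \<epsilon> unfolding locally_octahedral_wrt_def by fastforce
  obtain w2 where w2: "norm w2 = 1"
    and ineq2: "\<And>s::real. (1 - \<epsilon>) * (\<bar>s\<bar> * norm y + 1) \<le> norm (s *\<^sub>R y + w2)"
    using Y \<epsilon> unfolding locally_octahedral_wrt_def by fastforce
  define n where "n = lp_norm2 p (norm x) (norm y)"
  have nz: "psum_norm p z = n" by (simp add: z n_def psum_norm_eq_lp_norm2)
  have xy_le_n: "norm x \<le> n" "norm y \<le> n"
    using lp_norm2_ge_left[OF p] lp_norm2_ge_right[OF p] by (simp_all add: n_def)
  show "\<exists>W. psum_norm p W = 1 \<and>
      (\<forall>s::real. (1 - \<epsilon>) * (\<bar>s\<bar> * psum_norm p z + psum_norm p W) \<le> psum_norm p (s *\<^sub>R z + W))"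
  proof (cases "n = 0")
    case True
    then have "z = 0" using xy_le_n by (simp add: z zero_prod_def)
    moreover have "psum_norm p (w1, 0::'b) = 1"
      using w1 p by (simp add: psum_norm_eq_lp_norm2 lp_norm2_zero_right)
    ultimately show ?thesis using \<epsilon> nz True by (intro exI[of _ "(w1, 0)"]) simp
  next
    case False
    then have n: "n > 0" using xy_le_n norm_ge_zero[of x] by linarith
    define W where "W = ((norm x / n) *\<^sub>R w1, (norm y / n) *\<^sub>R w2)"
    have "psum_norm p W = 1"
      using lp_norm2_scale[OF p, of "1 / n" "norm x" "norm y"] n w1 w2
      by (simp add: W_def psum_norm_eq_lp_norm2 n_def)
    moreover have "(1 - \<epsilon>) * (\<bar>s\<bar> * n + 1) \<le> psum_norm p (s *\<^sub>R z + W)" for s :: real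
      using psum_octahedral_ineq_proportional[OF p _ _ _ ineq1 ineq2] n \<epsilon>
      by (simp add: z W_def n_def)
    ultimately show ?thesis using nz by (intro exI[of _ W]) simp
  qed
qed

section \<open>Local octahedrality of the first summand\<close>

lemma psum_octahedral_along_first_summand:
  fixes x :: "'a::real_normed_vector"
  assumes Z: "locally_octahedral_wrt (psum_norm p :: 'a \<times> 'b::real_normed_vector \<Rightarrow> real)"
    and p: "1 \<le> p" and \<delta>: "0 < \<delta>"
  obtains u :: 'a and v :: "'b::real_normed_vector" where "lp_norm2 p (norm u) (norm v) = 1"
    and "\<And>s::real. (1 - \<delta>) * (\<bar>s\<bar> * norm x + 1) \<le> lp_norm2 p (norm (s *\<^sub>R x + u)) (norm v)"
proof -
  obtain W :: "'a \<times> 'b" where W: "psum_norm p W = 1"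
    and ineq: "\<And>s::real. (1 - \<delta>) * (\<bar>s\<bar> * psum_norm p (x, 0::'b) + psum_norm p W)
                 \<le> psum_norm p (s *\<^sub>R (x, 0) + W)"
    using Z \<delta> unfolding locally_octahedral_wrt_def by blast
  obtain u v where "W = (u, v)" by fastforce
  then show thesis
    using that W ineq p by (simp add: psum_norm_eq_lp_norm2 lp_norm2_zero_right)
qed

lemma octahedral_point_of_almost_unit:
  fixes x u :: "'a::real_normed_vector"
  assumes \<epsilon>: "0 < \<epsilon>" "\<epsilon> < 1"
    and u: "1 - \<epsilon> / 4 \<le> norm u" "norm u \<le> 1"
    and ineq: "\<And>s::real. (1 - \<epsilon> / 2) * (\<bar>s\<bar> * norm x + 1) - \<epsilon> / 4 \<le> norm (s *\<^sub>R x + u)"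
  shows "\<exists>w. norm w = 1 \<and> (\<forall>s::real. (1 - \<epsilon>) * (\<bar>s\<bar> * norm x + norm w) \<le> norm (s *\<^sub>R x + w))"
proof (intro exI conjI allI)
  have "u \<noteq> 0" using u \<epsilon> by auto
  then show w: "norm (sgn u) = 1" by (simp add: norm_sgn)
  have "u - sgn u = (1 - 1 / norm u) *\<^sub>R u" by (simp add: sgn_div_norm divide_inverse algebra_simps)
  moreover have "\<bar>1 - 1 / norm u\<bar> = 1 / norm u - 1"
    using \<open>u \<noteq> 0\<close> u(2) by (simp add: field_simps)
  ultimately have dist: "norm (u - sgn u) = 1 - norm u"
    using \<open>u \<noteq> 0\<close> by (simp add: left_diff_distrib)
  fix s :: real
  have "0 \<le> \<bar>s\<bar> * norm x" by simp
  then have "(1 - \<epsilon>) * (\<bar>s\<bar> * norm x + 1) \<le> (1 - \<epsilon> / 2) * (\<bar>s\<bar> * norm x + 1) - \<epsilon> / 2"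
    using \<epsilon> by (simp add: algebra_simps)
  also have "\<dots> \<le> norm (s *\<^sub>R x + u) - norm (u - sgn u)"
    using ineq[of s] u(1) dist by simp
  also have "\<dots> \<le> norm (s *\<^sub>R x + sgn u)"
    using norm_triangle_ineq[of "s *\<^sub>R x + sgn u" "u - sgn u"] by simp
  finally show "(1 - \<epsilon>) * (\<bar>s\<bar> * norm x + norm (sgn u)) \<le> norm (s *\<^sub>R x + sgn u)"
    using w by simp
qed

lemma octahedral_point_of_psum_infinity:
  fixes x :: "'a::real_normed_vector"
  assumes Z: "locally_octahedral_wrt (psum_norm \<infinity> :: 'a \<times> 'b::real_normed_vector \<Rightarrow> real)"
    and x: "x \<noteq> 0" and \<epsilon>: "0 < \<epsilon>" "\<epsilon> < 1"
  shows "\<exists>w. norm w = 1 \<and> (\<forall>s::real. (1 - \<epsilon>) * (\<bar>s\<bar> * norm x + norm w) \<le> norm (s *\<^sub>R x + w))"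
proof -
  define \<delta> where "\<delta> = \<epsilon> / 16"
  have \<delta>: "0 < \<delta>" using \<epsilon> by (simp add: \<delta>_def)
  obtain u :: 'a and v :: 'b where uv: "max (norm u) (norm v) = 1"
    and H: "\<And>s::real. (1 - \<delta>) * (\<bar>s\<bar> * norm x + 1) \<le> max (norm (s *\<^sub>R x + u)) (norm v)"
    using psum_octahedral_along_first_summand[OF Z _ \<delta>, of x] by auto
  have "2 * (1 - \<delta>) \<le> max (norm (sgn x + u)) (norm v)"
    using H[of "1 / norm x"] x by (simp add: sgn_div_norm divide_inverse_commute)
  moreover have "norm (sgn x + u) \<le> 1 + norm u"
    using norm_triangle_ineq[of "sgn x" u] x by (simp add: norm_sgn)
  ultimately have u_large: "1 - 2 * \<delta> \<le> norm u"
    using uv \<epsilon> by (simp add: \<delta>_def)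
  show ?thesis
  proof (rule octahedral_point_of_almost_unit[OF \<epsilon>])
    show "1 - \<epsilon> / 4 \<le> norm u" "norm u \<le> 1" using u_large uv by (simp_all add: \<delta>_def)
    fix s :: real
    define T where "T = \<bar>s\<bar> * norm x"
    have T: "0 \<le> T" by (simp add: T_def)
    show "(1 - \<epsilon> / 2) * (\<bar>s\<bar> * norm x + 1) - \<epsilon> / 4 \<le> norm (s *\<^sub>R x + u)"
    \<comment> \<open>If \<open>\<parallel>v\<parallel>\<close> is the larger coordinate in \<open>H\<close>, then \<open>T \<le> 2\<delta>\<close> and \<open>u\<close> alone suffices.\<close>
    proof (cases "(1 - \<delta>) * (T + 1) \<le> norm (s *\<^sub>R x + u)")
      case True
      then show ?thesis
        using mult_right_mono[of "1 - \<epsilon> / 2" "1 - \<delta>" "T + 1"] T \<epsilon> by (simp add: T_def \<delta>_def)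
    next
      case False
      then have "(1 - \<delta>) * (T + 1) \<le> 1"
        using H[of s] uv by (simp add: T_def)
      moreover have "\<delta> * T \<le> T / 16"
        using mult_right_mono[of \<epsilon> 1 T] T \<epsilon> by (simp add: \<delta>_def)
      ultimately have "T \<le> 2 * \<delta>" using \<epsilon> by (simp add: algebra_simps \<delta>_def)
      moreover have "norm u - T \<le> norm (s *\<^sub>R x + u)"
        using norm_triangle_ineq2[of u "- (s *\<^sub>R x)"] by (simp add: T_def add.commute)
      moreover have "(1 - \<epsilon> / 2) * (T + 1) - \<epsilon> / 4 = T + 1 - \<epsilon> * T / 2 - 3 * \<epsilon> / 4"
        by (simp add: algebra_simps)
      moreover have "0 \<le> \<epsilon> * T" using T \<epsilon> by simp
      ultimately have "(1 - \<epsilon> / 2) * (T + 1) - \<epsilon> / 4 \<le> norm (s *\<^sub>R x + u)"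
        using u_large \<epsilon> unfolding \<delta>_def T_def[symmetric] by linarith
      then show ?thesis by (simp add: T_def)
    qed
  qed
qed

lemma octahedral_point_of_psum_finite:
  fixes x :: "'a::real_normed_vector" and q :: real
  assumes Z: "locally_octahedral_wrt (psum_norm (ereal q) :: 'a \<times> 'b::real_normed_vector \<Rightarrow> real)"
    and q: "1 < q" and x: "x \<noteq> 0" and \<epsilon>: "0 < \<epsilon>" "\<epsilon> < 1"
  shows "\<exists>w. norm w = 1 \<and> (\<forall>s::real. (1 - \<epsilon>) * (\<bar>s\<bar> * norm x + norm w) \<le> norm (s *\<^sub>R x + w))"
proof -
  have p: "1 \<le> ereal q" using q by simp
  have \<epsilon>4: "0 < \<epsilon> / 4" using \<epsilon> by simp
  have "\<forall>\<^sub>F \<delta> in at_right 0. \<delta> \<in> {0<..<\<epsilon> / 2}"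
    using eventually_at_right_real[of 0 "\<epsilon> / 2"] \<epsilon> by simp
  from eventually_happens'[OF trivial_limit_at_right_real
      eventually_conj[OF this eventually_lq_doubling_imp_second_small[OF q \<epsilon>4]]]
  obtain \<delta> where \<delta>: "\<delta> \<in> {0<..<\<epsilon> / 2}"
    and second_small: "\<forall>\<alpha> \<beta>. 0 \<le> \<alpha> \<longrightarrow> 0 \<le> \<beta> \<longrightarrow> \<alpha> powr q + \<beta> powr q = 1 \<longrightarrow>
             2 * (1 - \<delta>) \<le> ((1 + \<alpha>) powr q + \<beta> powr q) powr (1 / q) \<longrightarrow> \<beta> \<le> \<epsilon> / 4"
    by blast
  then have \<delta>0: "0 < \<delta>" by simp
  obtain u :: 'a and v :: 'b where unit: "lp_norm2 (ereal q) (norm u) (norm v) = 1"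
    and H: "\<And>s::real. (1 - \<delta>) * (\<bar>s\<bar> * norm x + 1) \<le> lp_norm2 (ereal q) (norm (s *\<^sub>R x + u)) (norm v)"
    using psum_octahedral_along_first_summand[OF Z p \<delta>0] by blast
  define \<alpha> \<beta> where "\<alpha> = norm u" and "\<beta> = norm v"
  have \<alpha>\<beta>: "0 \<le> \<alpha>" "0 \<le> \<beta>" by (simp_all add: \<alpha>_def \<beta>_def)
  have unit_q: "\<alpha> powr q + \<beta> powr q = 1"
    using arg_cong[OF unit, of "\<lambda>t. t powr q"] q by (simp add: \<alpha>_def \<beta>_def powr_powr)
  have "2 * (1 - \<delta>) \<le> lp_norm2 (ereal q) (norm (sgn x + u)) \<beta>"
    using H[of "1 / norm x"] x by (simp add: \<beta>_def sgn_div_norm divide_inverse_commute)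
  also have "\<dots> \<le> lp_norm2 (ereal q) (1 + \<alpha>) \<beta>"
    using norm_triangle_ineq[of "sgn x" u] x \<alpha>\<beta> by (intro lp_norm2_mono[OF p]) (simp_all add: norm_sgn \<alpha>_def)
  finally have "\<beta> \<le> \<epsilon> / 4"
    using second_small \<alpha>\<beta> unit_q by simp
  show ?thesis
  proof (rule octahedral_point_of_almost_unit[OF \<epsilon>])
    show "1 - \<epsilon> / 4 \<le> norm u" "norm u \<le> 1"
      using lq_unit_sphere_first_ge[OF _ \<alpha>\<beta> unit_q] q \<open>\<beta> \<le> \<epsilon> / 4\<close> by (simp_all add: \<alpha>_def)
    fix s :: real
    have "(1 - \<epsilon> / 2) * (\<bar>s\<bar> * norm x + 1) \<le> (1 - \<delta>) * (\<bar>s\<bar> * norm x + 1)"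
      using \<delta> by (intro mult_right_mono) auto
    also have "\<dots> \<le> lp_norm2 (ereal q) (norm (s *\<^sub>R x + u)) \<beta>"
      using H[of s] by (simp add: \<beta>_def)
    also have "\<dots> \<le> norm (s *\<^sub>R x + u) + \<epsilon> / 4"
      using lp_norm2_le_add[OF p, of "norm (s *\<^sub>R x + u)" \<beta>] \<alpha>\<beta> \<open>\<beta> \<le> \<epsilon> / 4\<close> by simp
    finally show "(1 - \<epsilon> / 2) * (\<bar>s\<bar> * norm x + 1) - \<epsilon> / 4 \<le> norm (s *\<^sub>R x + u)"
      by simp
  qed
qed

lemma locally_octahedral_first_summand:
  fixes p :: ereal
  assumes "\<exists>e::'a::real_normed_vector. e \<noteq> 0" and p: "1 < p"
    and Z: "locally_octahedral_wrt (psum_norm p :: 'a \<times> 'b::real_normed_vector \<Rightarrow> real)"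
  shows "locally_octahedral TYPE('a)"
proof (rule locally_octahedral_normI[OF assms(1)])
  fix x :: 'a and \<epsilon> :: real
  assume x\<epsilon>: "x \<noteq> 0" "0 < \<epsilon>" "\<epsilon> < 1"
  show "\<exists>w. norm w = 1 \<and> (\<forall>s::real. (1 - \<epsilon>) * (\<bar>s\<bar> * norm x + norm w) \<le> norm (s *\<^sub>R x + w))"
  proof (cases p)
    case (real q)
    with p Z show ?thesis
      using octahedral_point_of_psum_finite[OF _ _ x\<epsilon>] by simp
  next
    case PInf
    with Z show ?thesis
      using octahedral_point_of_psum_infinity[OF _ x\<epsilon>] by simp
  qed (use p in simp)
qed

theorem proposition4p1:
  fixes TX :: "'a::banach itself" and TY :: "'b::banach itself"
  assumes "\<exists>x::'a. x \<noteq> 0" and "\<exists>y::'b. y \<noteq> 0"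
  shows "(locally_octahedral TYPE('a) \<longrightarrow>
            locally_octahedral_wrt (psum_norm 1 :: 'a \<times> 'b \<Rightarrow> real))
       \<and> (\<forall>p::ereal. 1 < p \<longrightarrow> locally_octahedral TYPE('a) \<longrightarrow> locally_octahedral TYPE('b) \<longrightarrow>
            locally_octahedral_wrt (psum_norm p :: 'a \<times> 'b \<Rightarrow> real))
       \<and> (\<forall>p::ereal. 1 < p \<longrightarrow> locally_octahedral_wrt (psum_norm p :: 'a \<times> 'b \<Rightarrow> real) \<longrightarrow>
            locally_octahedral TYPE('a))"
proof (intro conjI allI impI)
  show "locally_octahedral_wrt (psum_norm 1 :: 'a \<times> 'b \<Rightarrow> real)" if "locally_octahedral TYPE('a)"
    using that by (rule locally_octahedral_psum_one)
  fix p :: ereal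
  assume "1 < p"
  show "locally_octahedral_wrt (psum_norm p :: 'a \<times> 'b \<Rightarrow> real)"
    if "locally_octahedral TYPE('a)" "locally_octahedral TYPE('b)"
    using locally_octahedral_psum[OF less_imp_le[OF \<open>1 < p\<close>] that] .
  show "locally_octahedral TYPE('a)" if "locally_octahedral_wrt (psum_norm p :: 'a \<times> 'b \<Rightarrow> real)"
    using locally_octahedral_first_summand[OF assms(1) \<open>1 < p\<close> that] .
qed

end
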